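(* Let $J$ be a countable set and $\mathcal{A}$ the non-unital algebra of finitely supported functions $J\to\mathbb{R}$ with pointwise operations. Let $\sigma:J\to J$ be a bijection, $\tilde{\sigma}(f)=f\circ\sigma^{-1}$, and $\Delta$ a $\tilde{\sigma}$-derivation on $\mathcal{A}$. If an element $\sum_{k=0}^m f_kx^k$ of degree $m$ (so $f_m\ne0$) of the Ore extension $\mathcal{A}[x,\tilde{\sigma},\Delta]$ belongs to the centralizer of $\mathcal{A}$, then $f_m=0$ on $Sep^m(J)$.
   Context: A $\tilde{\sigma}$-derivation is an $\mathbb{R}$-linear map $\Delta:\mathcal{A}\to\mathcal{A}$ with $\Delta(fg)=\tilde{\sigma}(f)\Delta(g)+\Delta(f)g$. $\mathcal{A}[x,\tilde{\sigma},\Delta]$ is the set of formal sums $\sum_{k=0}^m f_kx^k$, $f_k\in\mathcal{A}$, with coefficientwise addition and the associative bilinear multiplication determined by the rule $xf=\tilde{\sigma}(f)x+\Delta(f)$, i.e. $(fx^k)(gx^l)=f\,(x^kg)\,x^l$ where $x^kg\in\sum_i\mathcal{A}x^i$ is obtained by repeatedly applying this rule. The centralizer of $\mathcal{A}$ is the set of elements commuting with all elements of $\mathcal{A}$. $Sep^m(J)=\{p\in J:\sigma^m(p)\neq p\}$. *)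

theory Defs
  imports Complex_Main "HOL-Library.Countable"
begin

definition fin_supp :: "('j \<Rightarrow> real) set" where
  "fin_supp = {f. finite {j. f j \<noteq> 0}}"

definition sigma_tilde :: "('j \<Rightarrow> 'j) \<Rightarrow> ('j \<Rightarrow> real) \<Rightarrow> ('j \<Rightarrow> real)" where
  "sigma_tilde \<sigma> f = f \<circ> inv \<sigma>"

definition is_sigma_derivation ::
  "('j \<Rightarrow> 'j) \<Rightarrow> (('j \<Rightarrow> real) \<Rightarrow> ('j \<Rightarrow> real)) \<Rightarrow> bool" where
  "is_sigma_derivation \<sigma> \<Delta> \<longleftrightarrow>
     (\<forall>f\<in>fin_supp. \<Delta> f \<in> fin_supp) \<and>
     (\<forall>f\<in>fin_supp. \<forall>g\<in>fin_supp. \<Delta> (\<lambda>j. f j + g j) = (\<lambda>j. \<Delta> f j + \<Delta> g j)) \<and>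
     (\<forall>c::real. \<forall>f\<in>fin_supp. \<Delta> (\<lambda>j. c * f j) = (\<lambda>j. c * \<Delta> f j)) \<and>
     (\<forall>f\<in>fin_supp. \<forall>g\<in>fin_supp.
        \<Delta> (\<lambda>j. f j * g j) = (\<lambda>j. sigma_tilde \<sigma> f j * \<Delta> g j + \<Delta> f j * g j))"

text \<open>Coefficients (indexed by the power of x) of x^k g in the Ore extension,
  obtained by repeatedly applying x h = sigma-tilde(h) x + Delta(h).\<close>
fun xpow_mul ::
  "('j \<Rightarrow> 'j) \<Rightarrow> (('j \<Rightarrow> real) \<Rightarrow> ('j \<Rightarrow> real)) \<Rightarrow> nat \<Rightarrow> ('j \<Rightarrow> real)
     \<Rightarrow> nat \<Rightarrow> ('j \<Rightarrow> real)" where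
  "xpow_mul \<sigma> \<Delta> 0 g = (\<lambda>i. if i = 0 then g else (\<lambda>_. 0))"
| "xpow_mul \<sigma> \<Delta> (Suc k) g =
     (\<lambda>i j. (if i = 0 then 0 else sigma_tilde \<sigma> (xpow_mul \<sigma> \<Delta> k g (i - 1)) j)
          + \<Delta> (xpow_mul \<sigma> \<Delta> k g i) j)"

text \<open>Coefficient i of (sum_{k<=m} f_k x^k) * a, for a in A.\<close>
definition ore_mul_right ::
  "('j \<Rightarrow> 'j) \<Rightarrow> (('j \<Rightarrow> real) \<Rightarrow> ('j \<Rightarrow> real)) \<Rightarrow> nat \<Rightarrow> (nat \<Rightarrow> ('j \<Rightarrow> real))
     \<Rightarrow> ('j \<Rightarrow> real) \<Rightarrow> nat \<Rightarrow> ('j \<Rightarrow> real)" where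
  "ore_mul_right \<sigma> \<Delta> m f a i = (\<lambda>j. \<Sum>k\<le>m. f k j * xpow_mul \<sigma> \<Delta> k a i j)"

definition ore_mul_left ::
  "nat \<Rightarrow> (nat \<Rightarrow> ('j \<Rightarrow> real)) \<Rightarrow> ('j \<Rightarrow> real) \<Rightarrow> nat \<Rightarrow> ('j \<Rightarrow> real)" where
  "ore_mul_left m f a i = (\<lambda>j. if i \<le> m then a j * f i j else 0)"

definition in_centralizer ::
  "('j \<Rightarrow> 'j) \<Rightarrow> (('j \<Rightarrow> real) \<Rightarrow> ('j \<Rightarrow> real)) \<Rightarrow> nat \<Rightarrow> (nat \<Rightarrow> ('j \<Rightarrow> real)) \<Rightarrow> bool" where
  "in_centralizer \<sigma> \<Delta> m f \<longleftrightarrow>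
     (\<forall>a\<in>fin_supp. \<forall>i. ore_mul_left m f a i = ore_mul_right \<sigma> \<Delta> m f a i)"

definition Sep :: "('j \<Rightarrow> 'j) \<Rightarrow> nat \<Rightarrow> 'j set" where
  "Sep \<sigma> m = {p. (\<sigma> ^^ m) p \<noteq> p}"

end

theory Submission
  imports Defs
begin

text \<open>Multiplying by the unit vector at p and comparing top coefficients:
  the top coefficient of (f x^m) a is f m times a shifted by sigma^-m, so
  f m p = f m p * [sigma^-m p = p].\<close>

lemma sigma_derivation_zero:
  assumes "is_sigma_derivation \<sigma> \<Delta>"
  shows "\<Delta> (\<lambda>_. 0) = (\<lambda>_. 0)"
proof -
  have "\<forall>g\<in>fin_supp. \<Delta> (\<lambda>j. 0 * g j) = (\<lambda>j. 0 * \<Delta> g j)"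
    using assms unfolding is_sigma_derivation_def by blast
  moreover have "(\<lambda>_. 0 :: real) \<in> fin_supp" by (simp add: fin_supp_def)
  ultimately have "\<Delta> (\<lambda>j. 0 * (0::real)) = (\<lambda>j. 0 * \<Delta> (\<lambda>_. 0) j)" by (rule bspec)
  then show ?thesis by simp
qed

lemma xpow_mul_above_degree:
  assumes "\<Delta> (\<lambda>_. 0) = (\<lambda>_. 0)" and "k < i"
  shows "xpow_mul \<sigma> \<Delta> k a i = (\<lambda>_. 0)"
  using \<open>k < i\<close>
proof (induction k arbitrary: i)
  case 0
  then show ?case by simp
next
  case (Suc k)
  then have "xpow_mul \<sigma> \<Delta> k a (i - 1) = (\<lambda>_. 0)" "xpow_mul \<sigma> \<Delta> k a i = (\<lambda>_. 0)"
    by auto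
  with Suc.prems assms(1) show ?case
    by (simp add: sigma_tilde_def o_def)
qed

lemma xpow_mul_diagonal:
  assumes "\<Delta> (\<lambda>_. 0) = (\<lambda>_. 0)"
  shows "xpow_mul \<sigma> \<Delta> k a k = a \<circ> (inv \<sigma> ^^ k)"
proof (induction k)
  case 0
  then show ?case by simp
next
  case (Suc k)
  have "xpow_mul \<sigma> \<Delta> k a (Suc k) = (\<lambda>_. 0)"
    using xpow_mul_above_degree[where \<Delta> = \<Delta>, OF assms] by simp
  with Suc assms show ?case
    by (simp add: sigma_tilde_def o_def funpow_Suc_right del: funpow.simps)
qed

lemma ore_mul_right_top_coeff:
  assumes "\<Delta> (\<lambda>_. 0) = (\<lambda>_. 0)"
  shows "ore_mul_right \<sigma> \<Delta> m f a m = (\<lambda>j. f m j * a ((inv \<sigma> ^^ m) j))"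
proof
  fix j
  have "(\<Sum>k\<le>m. f k j * xpow_mul \<sigma> \<Delta> k a m j) = (\<Sum>k\<in>{m}. f k j * xpow_mul \<sigma> \<Delta> k a m j)"
    by (rule sum.mono_neutral_right) (auto simp: xpow_mul_above_degree[where \<Delta> = \<Delta>, OF assms])
  then show "ore_mul_right \<sigma> \<Delta> m f a m j = f m j * a ((inv \<sigma> ^^ m) j)"
    by (simp add: ore_mul_right_def xpow_mul_diagonal[where \<Delta> = \<Delta>, OF assms])
qed

lemma centralizer_top_coeff:
  assumes "in_centralizer \<sigma> \<Delta> m f" and "\<Delta> (\<lambda>_. 0) = (\<lambda>_. 0)" and "a \<in> fin_supp"
  shows "a j * f m j = f m j * a ((inv \<sigma> ^^ m) j)"
proof -
  have "ore_mul_left m f a m = ore_mul_right \<sigma> \<Delta> m f a m"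
    using assms(1,3) unfolding in_centralizer_def by blast
  then show ?thesis
    by (simp add: ore_mul_left_def ore_mul_right_top_coeff[where \<Delta> = \<Delta>, OF assms(2)] fun_eq_iff)
qed

lemma unit_vector_fin_supp: "(\<lambda>j. if j = p then 1 else 0 :: real) \<in> fin_supp"
proof -
  have "{j. (if j = p then 1 else 0 :: real) \<noteq> 0} = {p}" by auto
  then show ?thesis by (simp add: fin_supp_def)
qed

theorem theorem8:
  fixes \<sigma> :: "'j::countable \<Rightarrow> 'j"
    and \<Delta> :: "('j \<Rightarrow> real) \<Rightarrow> ('j \<Rightarrow> real)"
    and f :: "nat \<Rightarrow> ('j \<Rightarrow> real)"
    and m :: nat
  assumes "bij \<sigma>"
    and "is_sigma_derivation \<sigma> \<Delta>"
    and "\<forall>k\<le>m. f k \<in> fin_supp"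
    and "f m \<noteq> (\<lambda>_. 0)"
    and "in_centralizer \<sigma> \<Delta> m f"
  shows "\<forall>p\<in>Sep \<sigma> m. f m p = 0"
proof
  fix p
  assume "p \<in> Sep \<sigma> m"
  then have "(\<sigma> ^^ m) p \<noteq> p" by (simp add: Sep_def)
  moreover have "(\<sigma> ^^ m) ((inv \<sigma> ^^ m) p) = p"
    using fn_o_inv_fn_is_id[OF assms(1)] by (metis comp_apply)
  ultimately have shifted: "(inv \<sigma> ^^ m) p \<noteq> p" by metis
  have "1 * f m p = f m p * (if (inv \<sigma> ^^ m) p = p then 1 else 0)"
    using centralizer_top_coeff[OF assms(5) sigma_derivation_zero[OF assms(2)]
        unit_vector_fin_supp[of p], where j = p] by simp
  with shifted show "f m p = 0" by simp
qed

end
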